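(* Let $I(z)$ be a nonzero homogeneous polynomial solution of degree $d$ of the KZ system over $\mathbb{F}_p$. Then $d\equiv\sum_{j=1}^nM_j\pmod p$.
   Context: Let $p,q$ be primes and $n$ a positive integer with $p>n\ge2$, $p>q$. Fix positive integers $m_1,\dots,m_n<q$; $M_i$ is the least positive integer with $M_i\equiv -m_iq^{-1}\pmod p$. For $i\ne j$ let $\Omega_{ij}$ be the $n\times n$ matrix with only nonzero entries $(\Omega_{ij})_{ii}=-m_j$, $(\Omega_{ij})_{ij}=m_j$, $(\Omega_{ij})_{ji}=m_i$, $(\Omega_{ij})_{jj}=-m_i$. A polynomial solution of the KZ system over $\mathbb{F}_p$ is $I=(I_1,\dots,I_n)\in\mathbb{F}_p[z_1,\dots,z_n]^n$ with $\partial I/\partial z_i=q^{-1}\sum_{j\ne i}\Omega_{ij}I/(z_i-z_j)$ for all $i$ and $\sum_im_iI_i=0$ (computed in $\mathbb{F}_p$). *)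

theory Defs
  imports "HOL-Library.Poly_Mapping" "HOL-Number_Theory.Number_Theory"
begin

type_synonym 'a mpol = "(nat \<Rightarrow>\<^sub>0 nat) \<Rightarrow>\<^sub>0 'a"

definition mconst :: "'a::zero \<Rightarrow> 'a mpol" where
  "mconst c = Poly_Mapping.single 0 c"

definition mvar :: "nat \<Rightarrow> 'a::{zero,one} mpol" where
  "mvar i = Poly_Mapping.single (Poly_Mapping.single i 1) 1"

definition tdeg :: "(nat \<Rightarrow>\<^sub>0 nat) \<Rightarrow> nat" where
  "tdeg \<alpha> = (\<Sum>k\<in>Poly_Mapping.keys \<alpha>. Poly_Mapping.lookup \<alpha> k)"

definition mderiv :: "nat \<Rightarrow> 'a::comm_ring_1 mpol \<Rightarrow> 'a mpol" where
  "mderiv i P = (\<Sum>\<alpha>\<in>Poly_Mapping.keys P.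
     Poly_Mapping.single (\<alpha> - Poly_Mapping.single i 1) (of_nat (Poly_Mapping.lookup \<alpha> i) * Poly_Mapping.lookup P \<alpha>))"

definition in_vars :: "nat \<Rightarrow> 'a::zero mpol \<Rightarrow> bool" where
  "in_vars n P \<longleftrightarrow> (\<forall>\<alpha>\<in>Poly_Mapping.keys P. Poly_Mapping.keys \<alpha> \<subseteq> {..<n})"

definition homogeneous :: "nat \<Rightarrow> 'a::zero mpol \<Rightarrow> bool" where
  "homogeneous d P \<longleftrightarrow> (\<forall>\<alpha>\<in>Poly_Mapping.keys P. tdeg \<alpha> = d)"

text \<open>The matrix Omega_{ij} (indices 0..n-1), entry (a,b).\<close>
definition Omega :: "(nat \<Rightarrow> nat) \<Rightarrow> nat \<Rightarrow> nat \<Rightarrow> nat \<Rightarrow> nat \<Rightarrow> int" where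
  "Omega m i j a b =
     (if a = i \<and> b = i then - int (m j)
      else if a = i \<and> b = j then int (m j)
      else if a = j \<and> b = i then int (m i)
      else if a = j \<and> b = j then - int (m i)
      else 0)"

definition Mcoef :: "'a::field itself \<Rightarrow> nat \<Rightarrow> nat \<Rightarrow> nat" where
  "Mcoef _ q mi = (LEAST M::nat. 0 < M \<and> (of_nat M :: 'a) = - of_nat mi * inverse (of_nat q))"

text \<open>KZ system with denominators cleared: multiplying the i-th equation by
  D_i = prod_{l \<noteq> i} (z_i - z_l) (a nonzero polynomial), component k.\<close>
definition KZ_solution ::
  "nat \<Rightarrow> nat \<Rightarrow> (nat \<Rightarrow> nat) \<Rightarrow> (nat \<Rightarrow> 'a::field mpol) \<Rightarrow> bool" where
  "KZ_solution n q m I \<longleftrightarrow>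
     (\<forall>k<n. in_vars n (I k)) \<and>
     (\<forall>i<n. \<forall>k<n.
        (\<Prod>l\<in>{..<n}-{i}. mvar i - mvar l) * mderiv i (I k) =
        mconst (inverse (of_nat q)) *
          (\<Sum>j\<in>{..<n}-{i}.
             (\<Sum>b<n. mconst (of_int (Omega m i j k b)) * I b) *
             (\<Prod>l\<in>{..<n}-{i,j}. mvar i - mvar l))) \<and>
     (\<Sum>k<n. mconst (of_nat (m k)) * I k) = 0"

end

theory Submission
  imports Defs
begin

text \<open>Euler's identity makes the degree an eigenvalue: \<open>\<Sum>\<^sub>i z\<^sub>i \<partial>\<^sub>i I = d I\<close>.
  Substituting the KZ equations turns the left side into
  \<open>q\<^sup>-\<^sup>1 \<Sum>\<^sub>i \<Sum>\<^sub>j z\<^sub>i \<Omega>\<^sub>i\<^sub>j I / (z\<^sub>i - z\<^sub>j)\<close> (sum over \<open>j \<noteq> i\<close>); as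
  \<open>\<Omega>\<^sub>i\<^sub>j = \<Omega>\<^sub>j\<^sub>i\<close> and \<open>z\<^sub>i / (z\<^sub>i - z\<^sub>j) + z\<^sub>j / (z\<^sub>j - z\<^sub>i) = 1\<close>, the denominators
  disappear and one gets half of \<open>q\<^sup>-\<^sup>1 \<Sum>\<^sub>i\<^sub>\<noteq>\<^sub>j \<Omega>\<^sub>i\<^sub>j I\<close>. On vectors with
  \<open>\<Sum>\<^sub>k m\<^sub>k I\<^sub>k = 0\<close> the operator \<open>\<Sum>\<^sub>i\<^sub>\<noteq>\<^sub>j \<Omega>\<^sub>i\<^sub>j\<close> is the scalar \<open>-2 \<Sum>\<^sub>j m\<^sub>j\<close>, so
  \<open>2d = -2 q\<^sup>-\<^sup>1 \<Sum>\<^sub>j m\<^sub>j = 2 \<Sum>\<^sub>j M\<^sub>j\<close> in \<open>\<bbbF>\<^sub>p\<close>, and \<open>p\<close> is odd.\<close>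

lemma sum_off_diagonal_swap:
  fixes F :: "nat \<Rightarrow> nat \<Rightarrow> 'a::comm_monoid_add"
  shows "(\<Sum>i<n. \<Sum>j\<in>{..<n}-{i}. F i j) = (\<Sum>i<n. \<Sum>j\<in>{..<n}-{i}. F j i)"
proof -
  have off_diag: "(\<Sum>j\<in>{..<n}-{i}. G j) = (\<Sum>j<n. if j = i then 0 else G j)" for G i
    by (rule sum.mono_neutral_cong_left) auto
  have "(\<Sum>i<n. \<Sum>j<n. if j = i then 0 else F i j) = (\<Sum>j<n. \<Sum>i<n. if j = i then 0 else F i j)"
    by (rule sum.swap)
  also have "\<dots> = (\<Sum>i<n. \<Sum>j<n. if j = i then 0 else F j i)"
    by (intro sum.cong refl) auto
  finally show ?thesis unfolding off_diag .
qed

lemma sum_off_diagonal_symmetrize: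
  fixes F :: "nat \<Rightarrow> nat \<Rightarrow> 'a::semiring_1"
  shows "2 * (\<Sum>i<n. \<Sum>j\<in>{..<n}-{i}. F i j) = (\<Sum>i<n. \<Sum>j\<in>{..<n}-{i}. F i j + F j i)"
  using sum_off_diagonal_swap[of F n] by (simp only: mult_2 sum.distrib)

definition diff_prod :: "(nat \<Rightarrow> 'a::comm_ring_1) \<Rightarrow> nat \<Rightarrow> 'a" where
  "diff_prod z n = (\<Prod>i<n. \<Prod>l\<in>{..<n}-{i}. z i - z l)"

text \<open>\<open>diff_prod z n / (z i - z j)\<close>, written without division.\<close>
definition diff_prod_cofactor :: "(nat \<Rightarrow> 'a::comm_ring_1) \<Rightarrow> nat \<Rightarrow> nat \<Rightarrow> nat \<Rightarrow> 'a" where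
  "diff_prod_cofactor z n i j =
     (\<Prod>i'\<in>{..<n}-{i}. \<Prod>l\<in>{..<n}-{i'}. z i' - z l) * (\<Prod>l\<in>{..<n}-{i,j}. z i - z l)"

lemma diff_prod_remove_row:
  "i < n \<Longrightarrow> diff_prod z n = (\<Prod>l\<in>{..<n}-{i}. z i - z l) * (\<Prod>i'\<in>{..<n}-{i}. \<Prod>l\<in>{..<n}-{i'}. z i' - z l)"
  unfolding diff_prod_def by (subst prod.remove[of _ i]) auto

lemma diff_prod_cofactor:
  assumes "i < n" "j < n" "i \<noteq> j"
  shows "(z i - z j) * diff_prod_cofactor z n i j = diff_prod z n"
proof -
  have "{..<n}-{i}-{j} = {..<n}-{i,j}" by auto
  then have "(\<Prod>l\<in>{..<n}-{i}. z i - z l) = (z i - z j) * (\<Prod>l\<in>{..<n}-{i,j}. z i - z l)"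
    using assms by (subst prod.remove[of _ j]) auto
  then show ?thesis
    unfolding diff_prod_remove_row[OF assms(1)] diff_prod_cofactor_def by (simp only: ac_simps)
qed

lemma diff_prod_cofactor_antisym:
  fixes z :: "nat \<Rightarrow> 'a::idom"
  assumes "i < n" "j < n" "z i \<noteq> z j"
  shows "diff_prod_cofactor z n j i = - diff_prod_cofactor z n i j"
proof -
  have "i \<noteq> j" using assms(3) by auto
  then have "(z i - z j) * (diff_prod_cofactor z n i j + diff_prod_cofactor z n j i) = 0"
    using diff_prod_cofactor[of i n j z] diff_prod_cofactor[of j n i z] assms(1,2)
    by (simp add: algebra_simps)
  then show ?thesis
    using assms(3) by (simp add: eq_neg_iff_add_eq_0 add.commute)
qed

lemma diff_prod_nonzero:
  fixes z :: "nat \<Rightarrow> 'a::idom"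
  assumes "\<And>i j. i < n \<Longrightarrow> j < n \<Longrightarrow> i \<noteq> j \<Longrightarrow> z i \<noteq> z j"
  shows "diff_prod z n \<noteq> 0"
  unfolding diff_prod_def using assms by auto

text \<open>The identity \<open>\<Sum>\<^sub>i z\<^sub>i \<Sum>\<^sub>j A\<^sub>i\<^sub>j / (z\<^sub>i - z\<^sub>j) = \<Sum>\<^sub>i \<Sum>\<^sub>j A\<^sub>i\<^sub>j / 2\<close>
  (inner sums over \<open>j \<noteq> i\<close>) for symmetric \<open>A\<close>, with the denominators cleared.\<close>
lemma sum_mult_partial_fractions_symmetric:
  fixes z Der :: "nat \<Rightarrow> 'a::idom" and A :: "nat \<Rightarrow> nat \<Rightarrow> 'a"
  assumes z_inj: "\<And>i j. i < n \<Longrightarrow> j < n \<Longrightarrow> i \<noteq> j \<Longrightarrow> z i \<noteq> z j"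
    and A_sym: "\<And>i j. i < n \<Longrightarrow> j < n \<Longrightarrow> A i j = A j i"
    and cleared: "\<And>i. i < n \<Longrightarrow> (\<Prod>l\<in>{..<n}-{i}. z i - z l) * Der i =
                     c * (\<Sum>j\<in>{..<n}-{i}. A i j * (\<Prod>l\<in>{..<n}-{i,j}. z i - z l))"
  shows "2 * (\<Sum>i<n. z i * Der i) = c * (\<Sum>i<n. \<Sum>j\<in>{..<n}-{i}. A i j)"
proof -
  define D where "D = diff_prod z n"
  define T where "T = diff_prod_cofactor z n"
  have D_Der: "D * (z i * Der i) = c * (\<Sum>j\<in>{..<n}-{i}. A i j * z i * T i j)" if "i < n" for i
  proof -
    define R where "R = (\<Prod>i'\<in>{..<n}-{i}. \<Prod>l\<in>{..<n}-{i'}. z i' - z l)"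
    have "D * (z i * Der i) = z i * R * ((\<Prod>l\<in>{..<n}-{i}. z i - z l) * Der i)"
      unfolding D_def R_def diff_prod_remove_row[OF that] by (simp only: ac_simps)
    also have "\<dots> = c * (\<Sum>j\<in>{..<n}-{i}. A i j * z i * (R * (\<Prod>l\<in>{..<n}-{i,j}. z i - z l)))"
      unfolding cleared[OF that] by (simp add: sum_distrib_left ac_simps)
    finally show ?thesis unfolding T_def R_def diff_prod_cofactor_def .
  qed
  define S where "S = (\<Sum>i<n. \<Sum>j\<in>{..<n}-{i}. A i j * z i * T i j)"
  have "2 * S = (\<Sum>i<n. \<Sum>j\<in>{..<n}-{i}. A i j * z i * T i j + A j i * z j * T j i)"
    unfolding S_def by (rule sum_off_diagonal_symmetrize)
  also have "\<dots> = (\<Sum>i<n. \<Sum>j\<in>{..<n}-{i}. D * A i j)"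
  proof (intro sum.cong refl)
    fix i j assume "i \<in> {..<n}" "j \<in> {..<n}-{i}"
    then have ij: "i < n" "j < n" "i \<noteq> j" by auto
    have "A i j * z i * T i j + A j i * z j * T j i = A i j * ((z i - z j) * T i j)"
      using diff_prod_cofactor_antisym[OF ij(1,2) z_inj[OF ij]] A_sym[OF ij(1,2)]
      by (simp add: T_def algebra_simps)
    then show "A i j * z i * T i j + A j i * z j * T j i = D * A i j"
      unfolding T_def D_def diff_prod_cofactor[OF ij] by (simp only: ac_simps)
  qed
  finally have two_S: "2 * S = D * (\<Sum>i<n. \<Sum>j\<in>{..<n}-{i}. A i j)"
    by (simp only: sum_distrib_left)
  have "D * (\<Sum>i<n. z i * Der i) = c * S"
    using D_Der by (simp add: S_def sum_distrib_left)
  then have "D * (2 * (\<Sum>i<n. z i * Der i)) = c * (2 * S)"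
    by (metis mult.left_commute)
  also have "\<dots> = D * (c * (\<Sum>i<n. \<Sum>j\<in>{..<n}-{i}. A i j))"
    using two_S by (simp only: ac_simps)
  finally show ?thesis
    using diff_prod_nonzero[OF z_inj] by (simp add: D_def)
qed

lemma Omega_sym: "Omega m i j a b = Omega m j i a b"
  unfolding Omega_def by (cases "a = i"; cases "a = j"; cases "b = i"; cases "b = j"; simp)

lemma Omega_eq_0: "a \<noteq> i \<Longrightarrow> a \<noteq> j \<Longrightarrow> Omega m i j a b = 0"
  unfolding Omega_def by simp

lemma sum_Omega_row:
  assumes "k < n" "b < n"
  shows "(\<Sum>j\<in>{..<n}-{k}. Omega m k j k b) = int (m b) - (if b = k then (\<Sum>j<n. int (m j)) else 0)"
proof (cases "b = k")
  case True
  have "(\<Sum>j\<in>{..<n}-{k}. Omega m k j k b) = - (\<Sum>j\<in>{..<n}-{k}. int (m j))"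
    unfolding sum_negf[symmetric] by (intro sum.cong refl) (auto simp: Omega_def True)
  moreover have "(\<Sum>j<n. int (m j)) = int (m k) + (\<Sum>j\<in>{..<n}-{k}. int (m j))"
    using assms by (subst sum.remove[of _ k]) auto
  ultimately show ?thesis using True by simp
next
  case False
  have "(\<Sum>j\<in>{..<n}-{k}. Omega m k j k b) = (\<Sum>j\<in>{..<n}-{k}. if b = j then int (m j) else 0)"
    by (intro sum.cong refl) (auto simp: Omega_def False)
  also have "\<dots> = int (m b)"
    using False assms by (simp add: sum.delta)
  finally show ?thesis using False by simp
qed

lemma sum_Omega_column:
  assumes "k < n" "b < n"
  shows "(\<Sum>i<n. \<Sum>j\<in>{..<n}-{i}. Omega m i j k b)
         = 2 * int (m b) - (if b = k then 2 * (\<Sum>j<n. int (m j)) else 0)"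
proof -
  txt \<open>Row \<open>k\<close> of \<open>\<Omega>\<^sub>i\<^sub>j\<close> vanishes unless \<open>k \<in> {i, j}\<close>, and \<open>\<Omega>\<^sub>i\<^sub>j = \<Omega>\<^sub>j\<^sub>i\<close>,
    so the double sum is twice the row sum of the terms with \<open>i = k\<close>.\<close>
  define X where "X i j = (if i = k then Omega m i j k b else 0)" for i j
  have "(\<Sum>i<n. \<Sum>j\<in>{..<n}-{i}. Omega m i j k b)
        = (\<Sum>i<n. \<Sum>j\<in>{..<n}-{i}. X i j) + (\<Sum>i<n. \<Sum>j\<in>{..<n}-{i}. X j i)"
    unfolding sum.distrib[symmetric]
  proof (intro sum.cong refl)
    fix i j assume "i \<in> {..<n}" "j \<in> {..<n}-{i}"
    then show "Omega m i j k b = X i j + X j i"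
      by (cases "k = i"; cases "k = j") (auto simp: X_def Omega_eq_0 Omega_sym[of m j i])
  qed
  also have "\<dots> = 2 * (\<Sum>i<n. \<Sum>j\<in>{..<n}-{i}. X i j)"
    by (simp only: sum_off_diagonal_symmetrize sum.distrib)
  also have "(\<Sum>i<n. \<Sum>j\<in>{..<n}-{i}. X i j)
             = (\<Sum>i<n. if i = k then (\<Sum>j\<in>{..<n}-{k}. Omega m k j k b) else 0)"
    by (intro sum.cong refl) (simp add: X_def)
  also have "\<dots> = (\<Sum>j\<in>{..<n}-{k}. Omega m k j k b)"
    using assms(1) by (simp only: sum.delta finite_lessThan lessThan_iff if_True)
  finally show ?thesis
    unfolding sum_Omega_row[OF assms] by (cases "b = k") simp_all
qed

lemma sum_Omega_apply:
  fixes I :: "nat \<Rightarrow> 'a::comm_ring_1"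
  assumes "k < n" and linear: "(\<Sum>b<n. of_nat (m b) * I b) = 0"
  shows "(\<Sum>i<n. \<Sum>j\<in>{..<n}-{i}. \<Sum>b<n. of_int (Omega m i j k b) * I b)
         = - (2 * of_nat (\<Sum>j<n. m j)) * I k"
proof -
  have "(\<Sum>i<n. \<Sum>j\<in>{..<n}-{i}. \<Sum>b<n. of_int (Omega m i j k b) * I b)
        = (\<Sum>i<n. \<Sum>b<n. \<Sum>j\<in>{..<n}-{i}. of_int (Omega m i j k b) * I b)"
    by (rule sum.cong[OF refl], rule sum.swap)
  also have "\<dots> = (\<Sum>b<n. \<Sum>i<n. \<Sum>j\<in>{..<n}-{i}. of_int (Omega m i j k b) * I b)"
    by (rule sum.swap)
  also have "\<dots> = (\<Sum>b<n. of_int (\<Sum>i<n. \<Sum>j\<in>{..<n}-{i}. Omega m i j k b) * I b)"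
    by (simp only: of_int_sum sum_distrib_right)
  also have "\<dots> = (\<Sum>b<n. 2 * (of_nat (m b) * I b)
                        - (if b = k then 2 * of_nat (\<Sum>j<n. m j) * I k else 0))"
  proof (intro sum.cong refl)
    fix b assume "b \<in> {..<n}"
    then show "of_int (\<Sum>i<n. \<Sum>j\<in>{..<n}-{i}. Omega m i j k b) * I b
               = 2 * (of_nat (m b) * I b) - (if b = k then 2 * of_nat (\<Sum>j<n. m j) * I k else 0)"
      by (cases "b = k") (simp_all add: sum_Omega_column[OF assms(1)] left_diff_distrib mult.assoc)
  qed
  also have "\<dots> = - (2 * of_nat (\<Sum>j<n. m j)) * I k"
    using assms(1) by (simp add: sum_subtractf sum_distrib_left[symmetric] linear)
  finally show ?thesis .
qed

lemma mconst_of_nat [simp]: "mconst (of_nat k) = of_nat k"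
  unfolding mconst_def by simp

lemma mconst_of_int [simp]: "mconst (of_int k) = of_int k"
  unfolding mconst_def by simp

lemma mconst_mult: "mconst (a * b) = mconst a * mconst (b :: 'a::comm_ring_1)"
  unfolding mconst_def by (simp add: mult_single)

lemma lookup_mconst_mult: "Poly_Mapping.lookup (mconst c * P) \<alpha> = c * Poly_Mapping.lookup P \<alpha>"
  unfolding mconst_def mult_map_scale_conv_mult[symmetric] by (simp add: map.rep_eq when_def)

lemma mconst_mult_right_cancel:
  fixes P :: "'a::idom mpol"
  assumes "P \<noteq> 0" "mconst a * P = mconst b * P"
  shows "a = b"
proof -
  obtain \<alpha> where "Poly_Mapping.lookup P \<alpha> \<noteq> 0"
    using assms(1) by (metis lookup_zero poly_mapping_eqI)
  moreover have "a * Poly_Mapping.lookup P \<alpha> = b * Poly_Mapping.lookup P \<alpha>"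
    using assms(2) by (metis lookup_mconst_mult)
  ultimately show ?thesis by simp
qed

lemma mvar_inj: "i \<noteq> j \<Longrightarrow> (mvar i :: 'a::zero_neq_one mpol) \<noteq> mvar j"
  unfolding mvar_def by (metis lookup_single_eq lookup_single_not_eq zero_neq_one)

lemma mvar_mult_mderiv:
  "mvar i * mderiv i P = (\<Sum>\<alpha>\<in>Poly_Mapping.keys P.
     Poly_Mapping.single \<alpha> (of_nat (Poly_Mapping.lookup \<alpha> i) * Poly_Mapping.lookup P \<alpha>))"
  unfolding mderiv_def sum_distrib_left
proof (rule sum.cong[OF refl])
  fix \<alpha> :: "nat \<Rightarrow>\<^sub>0 nat"
  show "mvar i * Poly_Mapping.single (\<alpha> - Poly_Mapping.single i 1)
          (of_nat (Poly_Mapping.lookup \<alpha> i) * Poly_Mapping.lookup P \<alpha>) =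
        Poly_Mapping.single \<alpha> (of_nat (Poly_Mapping.lookup \<alpha> i) * Poly_Mapping.lookup P \<alpha>)"
  proof (cases "Poly_Mapping.lookup \<alpha> i = 0")
    case False
    have "Poly_Mapping.single i 1 + (\<alpha> - Poly_Mapping.single i 1) = \<alpha>"
      by (rule poly_mapping_eqI) (use False in \<open>auto simp: lookup_add lookup_minus lookup_single when_def\<close>)
    then show ?thesis unfolding mvar_def mult_single by simp
  qed simp
qed

lemma euler_homogeneous:
  fixes P :: "'a::comm_ring_1 mpol"
  assumes "in_vars n P" "homogeneous d P"
  shows "(\<Sum>i<n. mvar i * mderiv i P) = of_nat d * P"
proof (rule poly_mapping_eqI)
  fix \<beta>
  have "(\<Sum>i<n. Poly_Mapping.lookup \<beta> i) = d" if "\<beta> \<in> Poly_Mapping.keys P"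
  proof -
    have "(\<Sum>i<n. Poly_Mapping.lookup \<beta> i) = tdeg \<beta>"
      unfolding tdeg_def using assms(1) that unfolding in_vars_def
      by (intro sum.mono_neutral_right) (auto simp: in_keys_iff)
    then show ?thesis using assms(2) that unfolding homogeneous_def by auto
  qed
  then show "Poly_Mapping.lookup (\<Sum>i<n. mvar i * mderiv i P) \<beta> = Poly_Mapping.lookup (of_nat d * P) \<beta>"
    unfolding mvar_mult_mderiv lookup_sum lookup_single mconst_of_nat[symmetric] lookup_mconst_mult
    by (cases "\<beta> \<in> Poly_Mapping.keys P")
       (auto simp: when_def in_keys_iff sum.If_cases of_nat_sum[symmetric] sum_distrib_right[symmetric])
qed

lemma KZ_homogeneous_degree:
  fixes I :: "nat \<Rightarrow> 'a::field mpol"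
  assumes KZ: "KZ_solution n q m I" and hom: "\<forall>k<n. homogeneous d (I k)"
    and "k < n" "I k \<noteq> 0" and two: "(2::'a) \<noteq> 0"
  shows "(of_nat d :: 'a) = - of_nat (\<Sum>j<n. m j) * inverse (of_nat q)"
proof -
  define S where "S = (\<Sum>j<n. m j)"
  note KZ' = KZ[unfolded KZ_solution_def mconst_of_int mconst_of_nat]
  then have linear: "(\<Sum>b<n. of_nat (m b) * I b) = 0"
    by blast
  have "mconst (of_nat (2 * d)) * I k = 2 * (\<Sum>i<n. mvar i * mderiv i (I k))"
    unfolding mconst_of_nat using euler_homogeneous[of n "I k" d] KZ' hom \<open>k < n\<close> by simp
  also have "\<dots> = mconst (inverse (of_nat q))
                   * (\<Sum>i<n. \<Sum>j\<in>{..<n}-{i}. \<Sum>b<n. of_int (Omega m i j k b) * I b)"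
  proof (rule sum_mult_partial_fractions_symmetric)
    show "\<And>i j. i < n \<Longrightarrow> j < n \<Longrightarrow> i \<noteq> j \<Longrightarrow> (mvar i :: 'a mpol) \<noteq> mvar j"
      by (rule mvar_inj)
    show "\<And>i j. (\<Sum>b<n. of_int (Omega m i j k b) * I b) = (\<Sum>b<n. of_int (Omega m j i k b) * I b)"
      by (simp only: Omega_sym[of m _ _ k])
  qed (use KZ' \<open>k < n\<close> in auto)
  also have "\<dots> = mconst (inverse (of_nat q)) * (mconst (of_int (- 2 * int S)) * I k)"
    using sum_Omega_apply[OF \<open>k < n\<close> linear] unfolding mconst_of_int S_def by simp
  also have "\<dots> = mconst (inverse (of_nat q) * of_int (- 2 * int S)) * I k"
    by (simp only: mconst_mult mult.assoc)
  finally have "of_nat (2 * d) = inverse (of_nat q) * (of_int (- 2 * int S) :: 'a)"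
    by (rule mconst_mult_right_cancel[OF \<open>I k \<noteq> 0\<close>])
  then have "2 * (of_nat d + of_nat S * inverse (of_nat q)) = (0 :: 'a)"
    by (simp add: algebra_simps)
  with two have "of_nat d + of_nat S * inverse (of_nat q) = (0 :: 'a)"
    by (metis mult_eq_0_iff)
  then show ?thesis
    by (simp add: S_def eq_neg_iff_add_eq_0)
qed

lemma CHAR_eq_card_if_prime:
  assumes "prime (card (UNIV :: 'a::{finite,field} set))"
  shows "CHAR('a) = card (UNIV :: 'a set)"
proof -
  have "prime CHAR('a)"
    by (rule prime_CHAR_semidom, rule finite_imp_CHAR_pos) simp
  then show ?thesis
    using CHAR_dvd_CARD[where 'a='a] assms by (simp add: primes_dvd_imp_eq)
qed

lemma surj_of_nat_if_card_eq_CHAR: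
  assumes "card (UNIV :: 'a::{finite,ring_1} set) = CHAR('a)"
  shows "surj (of_nat :: nat \<Rightarrow> 'a)"
proof -
  have "inj_on (of_nat :: nat \<Rightarrow> 'a) {..<CHAR('a)}"
    by (rule inj_onI) (auto simp: of_nat_eq_iff_cong_CHAR intro: cong_less_modulus_unique_nat)
  then have "(of_nat ` {..<CHAR('a)} :: 'a set) = UNIV"
    using assms by (intro card_subset_eq) (auto simp: card_image)
  then show ?thesis by blast
qed

lemma of_nat_Mcoef:
  assumes "surj (of_nat :: nat \<Rightarrow> 'a::field)" "CHAR('a) > 0"
  shows "(of_nat (Mcoef TYPE('a) q mi) :: 'a) = - of_nat mi * inverse (of_nat q)"
proof -
  obtain k where k: "(of_nat k :: 'a) = - of_nat mi * inverse (of_nat q)"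
    using assms(1) by (metis surjD)
  have "0 < k + CHAR('a) \<and> (of_nat (k + CHAR('a)) :: 'a) = - of_nat mi * inverse (of_nat q)"
    using k assms(2) by simp
  then show ?thesis
    unfolding Mcoef_def by (rule LeastI_ex[THEN conjunct2, OF exI])
qed

theorem corollary5p5:
  fixes p q n d :: nat and m :: "nat \<Rightarrow> nat" and I :: "nat \<Rightarrow> 'a::{finite,field} mpol"
  assumes "prime p" and "prime q" and "card (UNIV :: 'a set) = p"
    and "n \<ge> 2" and "p > n" and "p > q"
    and "\<forall>i<n. 0 < m i \<and> m i < q"
    and "KZ_solution n q m I"
    and "\<forall>k<n. homogeneous d (I k)"
    and "\<exists>k<n. I k \<noteq> 0"
  shows "[d = (\<Sum>j<n. Mcoef TYPE('a) q (m j))] (mod p)"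
proof -
  have CHAR: "CHAR('a) = p"
    using CHAR_eq_card_if_prime[where 'a='a] assms(1,3) by simp
  have two: "(2::'a) \<noteq> 0"
    using of_nat_eq_0_iff_char_dvd[of 2, where 'a='a] assms(4,5) CHAR by (auto dest: dvd_imp_le)
  obtain k where "k < n" "I k \<noteq> 0"
    using assms(10) by blast
  then have "(of_nat d :: 'a) = - of_nat (\<Sum>j<n. m j) * inverse (of_nat q)"
    using KZ_homogeneous_degree assms(8,9) two by blast
  also have "\<dots> = of_nat (\<Sum>j<n. Mcoef TYPE('a) q (m j))"
  proof -
    have "surj (of_nat :: nat \<Rightarrow> 'a)"
      using surj_of_nat_if_card_eq_CHAR[where 'a='a] assms(3) CHAR by simp
    then have "(of_nat (Mcoef TYPE('a) q mi) :: 'a) = - of_nat mi * inverse (of_nat q)" for mi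
      using of_nat_Mcoef assms(1) CHAR prime_gt_0_nat by blast
    then show ?thesis by (simp add: sum_distrib_right sum_negf)
  qed
  finally show ?thesis
    by (simp only: of_nat_eq_iff_cong_CHAR CHAR)
qed

end
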